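(* Let $\mathcal C$ be a $\Delta$-complex labeled over $B(X,P)$ with set of $0$-cells $\mathcal C^{(0)}$. Define partial maps on $\mathcal C^{(0)}$ by: for $x\in X$, $v\cdot x=w$ iff there is a $1$-cell labeled $x$ from $v$ to $w$; $v\cdot x^{-1}=w$ iff there is a $1$-cell labeled $x$ from $w$ to $v$; for $\rho\in P$, $v\cdot\rho=v$ iff $v$ is the root of some cell labeled $\rho$ (and undefined otherwise). These are partial injections, and this action of the generators extends to a well-defined right action of $M(X,P)$ on $\mathcal C^{(0)}$ by partial injections (i.e. a homomorphism from $M(X,P)$ into the symmetric inverse monoid on $\mathcal C^{(0)}$, acting on the right).
   Context: A $\Delta$-complex is a CW-complex in which each $k$-cell $c$ has a distinguished characteristic map $\sigma_c\colon\Delta^k\to\mathcal C$, $\Delta^k=[v_0,\dots,v_k]$ the standard simplex with ordered vertices, such that the restriction of $\sigma_c$ to each $(k-1)$-face (identified order-preservingly with $\Delta^{k-1}$) is the distinguished characteristic map of a $(k-1)$-cell. The root of $c$ is $\sigma_c(v_0)$; a $1$-cell $e$ is directed from $\sigma_e(v_0)$ to $\sigma_e(v_1)$. An immersion is a continuous map that is a local homeomorphism onto its image and commutes with characteristic maps (each $k$-cell $d$ maps onto a $k$-cell with $f\circ\sigma_d=\sigma_{f(d)}$). $B(X,P)$ is a $\Delta$-complex with one $0$-cell, $1$-cells indexed by $X$, $k$-cells ($2\le k\le n$) indexed by $P_k$, index sets pairwise disjoint, $P=\bigcup P_k$. $\mathcal C$ is labeled over $B(X,P)$ via an immersion $f_{\mathcal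 C}\colon\mathcal C\to B(X,P)$, and $\ell(c)$ is the index of $f_{\mathcal C}(c)$; $\ell(e^{-1})=\ell(e)^{-1}$. Boundary labels: for a $k$-cell $c$ ($k\ge2$) with characteristic map $\sigma$, let $c_i$ be the $(k-1)$-cell whose characteristic map is $\sigma$ restricted to the face omitting $v_i$, and $e(c)=\sigma([v_0,v_1])$; $bl(c)=\ell(\sigma[v_0,v_1])\ell(\sigma[v_1,v_2])\ell(\sigma[v_0,v_2])^{-1}$ if $k=2$, and $bl(c)=\ell(c_k)\cdots\ell(c_1)\ell(e(c))\ell(c_0)\ell(e(c))^{-1}$ if $k\ge3$; $bl(\rho)$ denotes the boundary label of the cell of $B(X,P)$ labeled $\rho$. $M(X,P)$ is the inverse monoid presented by generators $X\cup P$ and relations $\rho^2=\rho$, $\rho=\rho\,bl(\rho)$ for $\rho\in P$. *)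

theory Defs
  imports Main
begin

text \<open>A Delta-complex is encoded combinatorially: a set of cells C, a dimension
function, and face maps: face c i is the (k-1)-cell whose characteristic map is the
restriction of that of c to the face omitting vertex v_i.\<close>

definition delta_complex :: "'c set \<Rightarrow> ('c \<Rightarrow> nat) \<Rightarrow> ('c \<Rightarrow> nat \<Rightarrow> 'c) \<Rightarrow> bool" where
  "delta_complex C dim face \<longleftrightarrow>
     (\<forall>c\<in>C. \<forall>i. 0 < dim c \<and> i \<le> dim c \<longrightarrow> face c i \<in> C \<and> dim (face c i) = dim c - 1) \<and>
     (\<forall>c\<in>C. \<forall>i j. 2 \<le> dim c \<and> i < j \<and> j \<le> dim c \<longrightarrow>
        face (face c j) i = face (face c i) (j - 1))"

text \<open>sub face k c vs: the cell whose characteristic map is the restriction of that of the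
k-cell c to the face spanned by the vertices v_s, s in vs (vs strictly increasing).\<close>

fun sub :: "('c \<Rightarrow> nat \<Rightarrow> 'c) \<Rightarrow> nat \<Rightarrow> 'c \<Rightarrow> nat list \<Rightarrow> 'c" where
  "sub face 0 c vs = c"
| "sub face (Suc k) c vs =
     (if set vs = {0..Suc k} then c
      else (let i = Min ({0..Suc k} - set vs)
            in sub face k (face c i) (map (\<lambda>s. if s < i then s else s - 1) vs)))"

definition subcell :: "('c \<Rightarrow> nat) \<Rightarrow> ('c \<Rightarrow> nat \<Rightarrow> 'c) \<Rightarrow> 'c \<Rightarrow> nat list \<Rightarrow> 'c" where
  "subcell dim face c vs = sub face (dim c) c vs"

definition face_index :: "nat \<Rightarrow> nat list \<Rightarrow> bool" where
  "face_index k vs \<longleftrightarrow> vs \<noteq> [] \<and> sorted_wrt (<) vs \<and> set vs \<subseteq> {0..k}"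

text \<open>Cells of B(X,P): None is the unique 0-cell, Some a for a in X (1-cells) or
a in P k (k-cells, 2 <= k <= n).\<close>

definition Bcells :: "'a set \<Rightarrow> (nat \<Rightarrow> 'a set) \<Rightarrow> nat \<Rightarrow> 'a option set" where
  "Bcells X P n = insert None (Some ` (X \<union> (\<Union>k\<in>{2..n}. P k)))"

definition Bdim :: "'a set \<Rightarrow> (nat \<Rightarrow> 'a set) \<Rightarrow> 'a option \<Rightarrow> nat" where
  "Bdim X P c = (case c of None \<Rightarrow> 0
                  | Some a \<Rightarrow> (if a \<in> X then 1 else (THE k. a \<in> P k)))"

definition B_structure :: "'a set \<Rightarrow> (nat \<Rightarrow> 'a set) \<Rightarrow> nat \<Rightarrow> ('a option \<Rightarrow> nat \<Rightarrow> 'a option) \<Rightarrow> bool" where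
  "B_structure X P n faceB \<longleftrightarrow>
     (\<forall>k. X \<inter> P k = {}) \<and>
     (\<forall>j k. j \<noteq> k \<longrightarrow> P j \<inter> P k = {}) \<and>
     (\<forall>k. (k < 2 \<or> n < k) \<longrightarrow> P k = {}) \<and>
     delta_complex (Bcells X P n) (Bdim X P) faceB"

text \<open>Generators of M(X,P) as letters: (a, False) is a, (a, True) is a^{-1}.\<close>

definition winv :: "('a \<times> bool) list \<Rightarrow> ('a \<times> bool) list" where
  "winv w = rev (map (\<lambda>(a, b). (a, \<not> b)) w)"

definition bl_word :: "('a option \<Rightarrow> nat \<Rightarrow> 'a option) \<Rightarrow> nat \<Rightarrow> 'a \<Rightarrow> ('a \<times> bool) list" where
  "bl_word faceB k \<rho> =
     (let c = Some \<rho>; e = sub faceB k c [0, 1] in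
      if k = 2 then
        [(the (sub faceB 2 c [0, 1]), False), (the (sub faceB 2 c [1, 2]), False),
         (the (sub faceB 2 c [0, 2]), True)]
      else map (\<lambda>i. (the (faceB c i), False)) (rev [1..<k+1])
           @ [(the e, False), (the (faceB c 0), False), (the e, True)])"

text \<open>The congruence on words over A \<union> A^{-1} defining Inv<A | R>: generated by the
Wagner relations and R.\<close>

inductive_set inv_cong :: "'a set \<Rightarrow> (('a \<times> bool) list \<times> ('a \<times> bool) list) set
    \<Rightarrow> (('a \<times> bool) list \<times> ('a \<times> bool) list) set" for A R where
  refl: "w \<in> lists (A \<times> UNIV) \<Longrightarrow> (w, w) \<in> inv_cong A R"
| sym: "(u, v) \<in> inv_cong A R \<Longrightarrow> (v, u) \<in> inv_cong A R"
| trans: "(u, v) \<in> inv_cong A R \<Longrightarrow> (v, w) \<in> inv_cong A R \<Longrightarrow> (u, w) \<in> inv_cong A R"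
| ctx: "(u, v) \<in> inv_cong A R \<Longrightarrow> p \<in> lists (A \<times> UNIV) \<Longrightarrow> q \<in> lists (A \<times> UNIV)
          \<Longrightarrow> (p @ u @ q, p @ v @ q) \<in> inv_cong A R"
| wagner1: "u \<in> lists (A \<times> UNIV) \<Longrightarrow> (u @ winv u @ u, u) \<in> inv_cong A R"
| wagner2: "u \<in> lists (A \<times> UNIV) \<Longrightarrow> v \<in> lists (A \<times> UNIV)
          \<Longrightarrow> (u @ winv u @ v @ winv v, v @ winv v @ u @ winv u) \<in> inv_cong A R"
| rel: "(u, v) \<in> R \<Longrightarrow> (u, v) \<in> inv_cong A R"

definition M_alphabet :: "'a set \<Rightarrow> (nat \<Rightarrow> 'a set) \<Rightarrow> nat \<Rightarrow> 'a set" where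
  "M_alphabet X P n = X \<union> (\<Union>k\<in>{2..n}. P k)"

definition M_relations :: "(nat \<Rightarrow> 'a set) \<Rightarrow> nat \<Rightarrow> ('a option \<Rightarrow> nat \<Rightarrow> 'a option)
    \<Rightarrow> (('a \<times> bool) list \<times> ('a \<times> bool) list) set" where
  "M_relations P n faceB =
     {([(\<rho>, False), (\<rho>, False)], [(\<rho>, False)]) | \<rho> k. k \<in> {2..n} \<and> \<rho> \<in> P k} \<union>
     {([(\<rho>, False)], (\<rho>, False) # bl_word faceB k \<rho>) | \<rho> k. k \<in> {2..n} \<and> \<rho> \<in> P k}"

definition M_equiv :: "'a set \<Rightarrow> (nat \<Rightarrow> 'a set) \<Rightarrow> nat \<Rightarrow> ('a option \<Rightarrow> nat \<Rightarrow> 'a option)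
    \<Rightarrow> (('a \<times> bool) list \<times> ('a \<times> bool) list) set" where
  "M_equiv X P n faceB = inv_cong (M_alphabet X P n) (M_relations P n faceB)"

text \<open>lab is the immersion f_C : C \<rightarrow> B(X,P): it maps each k-cell onto a k-cell,
commutes with characteristic maps (hence with all faces), and is a local homeomorphism
onto its image: distinct cells containing a common cell d at the same position
(same face operator vs) have distinct images.\<close>

definition labeled_over :: "'c set \<Rightarrow> ('c \<Rightarrow> nat) \<Rightarrow> ('c \<Rightarrow> nat \<Rightarrow> 'c) \<Rightarrow> ('c \<Rightarrow> 'a option)
    \<Rightarrow> 'a set \<Rightarrow> (nat \<Rightarrow> 'a set) \<Rightarrow> nat \<Rightarrow> ('a option \<Rightarrow> nat \<Rightarrow> 'a option) \<Rightarrow> bool" where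
  "labeled_over C dim face lab X P n faceB \<longleftrightarrow>
     delta_complex C dim face \<and>
     (\<forall>c\<in>C. lab c \<in> Bcells X P n \<and> Bdim X P (lab c) = dim c) \<and>
     (\<forall>c\<in>C. \<forall>i. 0 < dim c \<and> i \<le> dim c \<longrightarrow> lab (face c i) = faceB (lab c) i) \<and>
     (\<forall>c\<in>C. \<forall>c'\<in>C. \<forall>vs. dim c = dim c' \<and> face_index (dim c) vs \<and>
        subcell dim face c vs = subcell dim face c' vs \<and> lab c = lab c' \<longrightarrow> c = c')"

definition vertices :: "'c set \<Rightarrow> ('c \<Rightarrow> nat) \<Rightarrow> 'c set" where
  "vertices C dim = {v \<in> C. dim v = 0}"

definition gen_rel :: "'c set \<Rightarrow> ('c \<Rightarrow> nat) \<Rightarrow> ('c \<Rightarrow> nat \<Rightarrow> 'c) \<Rightarrow> ('c \<Rightarrow> 'a option)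
    \<Rightarrow> 'a set \<Rightarrow> 'a \<Rightarrow> ('c \<times> 'c) set" where
  "gen_rel C dim face lab X a =
     (if a \<in> X then
        {(subcell dim face e [0], subcell dim face e [1]) | e. e \<in> C \<and> dim e = 1 \<and> lab e = Some a}
      else {(subcell dim face c [0], subcell dim face c [0]) | c. c \<in> C \<and> lab c = Some a})"

definition letter_rel :: "('a \<Rightarrow> ('c \<times> 'c) set) \<Rightarrow> 'a \<times> bool \<Rightarrow> ('c \<times> 'c) set" where
  "letter_rel G l = (if snd l then (G (fst l))\<inverse> else G (fst l))"

text \<open>Right action of a word: v \<cdot> (l1 l2 ... lm) = (...((v \<cdot> l1) \<cdot> l2)...) \<cdot> lm.\<close>

definition word_rel :: "('a \<Rightarrow> ('c \<times> 'c) set) \<Rightarrow> 'c set \<Rightarrow> ('a \<times> bool) list \<Rightarrow> ('c \<times> 'c) set" where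
  "word_rel G V w = foldr (\<lambda>l r. letter_rel G l O r) w (Id_on V)"

definition partial_injection_on :: "'c set \<Rightarrow> ('c \<times> 'c) set \<Rightarrow> bool" where
  "partial_injection_on V r \<longleftrightarrow> r \<subseteq> V \<times> V \<and> single_valued r \<and> single_valued (r\<inverse>)"

end

theory Submission
  imports Defs
begin

text \<open>A word acts on the vertices by the composite of the relations of its letters; this is a
monoid homomorphism from words to relations under which formal inverses act by converses. The
generators act by partial injections (for \<open>x \<in> X\<close> this is where the local injectivity of the
labeling enters), hence so does every word, and partial injections satisfy Wagner's identities,
so the action factors through the free inverse monoid. A letter \<open>\<rho> \<in> P\<close> acts as the identity
on the roots of the cells labeled \<open>\<rho>\<close>, which is idempotent, and the boundary label of such a
cell \<open>c\<close>, read from its root, is a loop: the faces \<open>c\<^sub>k, \<dots>, c\<^sub>1\<close> share the root of \<open>c\<close> and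
fix it, and \<open>e(c)\<close> leads to the root of \<open>c\<^sub>0\<close>, which \<open>c\<^sub>0\<close> fixes, and back. Hence
\<open>\<rho> = \<rho> bl(\<rho>)\<close> holds as well.\<close>

lemma relcomp_converse_relcomp_eq:
  "single_valued (R\<inverse>) \<Longrightarrow> R O R\<inverse> O R = R"
  unfolding single_valued_def by auto

lemma relcomp_converse_eq_Id_on_Domain:
  "single_valued (R\<inverse>) \<Longrightarrow> R O R\<inverse> = Id_on (Domain R)"
  unfolding single_valued_def by blast

lemma relcomp_partial_identity_eq:
  assumes "R \<subseteq> Id" "single_valued S" "\<And>v. (v, v) \<in> R \<Longrightarrow> (v, v) \<in> S"
  shows "R O S = R"
  using assms unfolding single_valued_def by blast

locale partial_injection_generators =
  fixes G :: "'a \<Rightarrow> ('c \<times> 'c) set" and V :: "'c set"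
  assumes gen_subset: "\<And>a. G a \<subseteq> V \<times> V"
    and gen_single_valued: "\<And>a. single_valued (G a)"
    and gen_single_valued_converse: "\<And>a. single_valued ((G a)\<inverse>)"
begin

lemma letter_rel_subset: "letter_rel G l \<subseteq> V \<times> V"
  using gen_subset[of "fst l"] by (auto simp: letter_rel_def)

lemma letter_rel_inverse: "letter_rel G (a, \<not> b) = (letter_rel G (a, b))\<inverse>"
  by (auto simp: letter_rel_def)

lemma word_rel_Nil [simp]: "word_rel G V [] = Id_on V"
  by (simp add: word_rel_def)

lemma word_rel_Cons [simp]: "word_rel G V (l # u) = letter_rel G l O word_rel G V u"
  by (simp add: word_rel_def)

lemma word_rel_subset: "word_rel G V u \<subseteq> V \<times> V"
  by (induction u) (use letter_rel_subset in auto)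

lemma word_rel_single: "word_rel G V [l] = letter_rel G l"
  using letter_rel_subset[of l] by auto

lemma word_rel_append: "word_rel G V (u @ v) = word_rel G V u O word_rel G V v"
proof (induction u)
  case Nil
  then show ?case using word_rel_subset[of v] by auto
qed (simp add: O_assoc)

lemma word_rel_winv: "word_rel G V (winv u) = (word_rel G V u)\<inverse>"
proof (induction u)
  case Nil
  then show ?case by (auto simp: winv_def)
next
  case (Cons l u)
  obtain a b where l: "l = (a, b)" by fastforce
  have "winv (l # u) = winv u @ [(a, \<not> b)]"
    by (simp add: winv_def l)
  then show ?case
    using letter_rel_subset[of l]
    by (simp add: Cons word_rel_append letter_rel_inverse l converse_relcomp) blast
qed

lemma word_rel_partial_injection: "partial_injection_on V (word_rel G V u)"
proof -
  have "single_valued (word_rel G V u) \<and> single_valued ((word_rel G V u)\<inverse>)"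
  proof (induction u)
    case Nil
    then show ?case by (auto simp: single_valued_def)
  next
    case (Cons l u)
    have "single_valued (letter_rel G l)" "single_valued ((letter_rel G l)\<inverse>)"
      using gen_single_valued gen_single_valued_converse by (auto simp: letter_rel_def)
    with Cons show ?case
      by (simp add: converse_relcomp single_valued_relcomp)
  qed
  then show ?thesis
    using word_rel_subset by (simp add: partial_injection_on_def)
qed

lemma word_rel_single_valued_converse: "single_valued ((word_rel G V u)\<inverse>)"
  using word_rel_partial_injection by (simp add: partial_injection_on_def)

lemma word_rel_wagner1: "word_rel G V (u @ winv u @ u) = word_rel G V u"
  by (simp add: word_rel_append word_rel_winv relcomp_converse_relcomp_eq
      word_rel_single_valued_converse)

text \<open>Both sides are compositions of two partial identities.\<close>

lemma word_rel_wagner2: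
  "word_rel G V (u @ winv u @ v @ winv v) = word_rel G V (v @ winv v @ u @ winv u)"
  by (simp add: word_rel_append word_rel_winv O_assoc[symmetric]
      relcomp_converse_eq_Id_on_Domain word_rel_single_valued_converse) blast

lemma word_rel_append_loops:
  "(\<forall>l\<in>set ls. (v, v) \<in> letter_rel G l) \<Longrightarrow> (v, w) \<in> word_rel G V u \<Longrightarrow>
    (v, w) \<in> word_rel G V (ls @ u)"
  by (induction ls) auto

lemma word_rel_inv_cong:
  assumes "\<And>u v. (u, v) \<in> R \<Longrightarrow> word_rel G V u = word_rel G V v"
  shows "(u, v) \<in> inv_cong A R \<Longrightarrow> word_rel G V u = word_rel G V v"
proof (induction rule: inv_cong.induct)
  case (ctx u v p q)
  then show ?case by (simp add: word_rel_append)
next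
  case (wagner1 u)
  show ?case by (rule word_rel_wagner1)
next
  case (wagner2 u v)
  show ?case by (rule word_rel_wagner2)
next
  case (rel u v)
  then show ?case by (rule assms)
qed auto

end

lemma sub_Suc_omit:
  assumes "i \<le> Suc k" "i \<notin> set vs" "\<forall>j<i. j \<in> set vs"
  shows "sub face (Suc k) c vs = sub face k (face c i) (map (\<lambda>s. if s < i then s else s - 1) vs)"
proof -
  have "Min ({0..Suc k} - set vs) = i"
    using assms by (intro Min_eqI) (auto simp: not_less[symmetric])
  moreover have "set vs \<noteq> {0..Suc k}"
    using assms by auto
  ultimately show ?thesis
    by (simp add: Let_def)
qed

lemma sub_Suc_all: "set vs = {0..Suc k} \<Longrightarrow> sub face (Suc k) c vs = c"
  by simp

declare sub.simps(2) [simp del]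

lemma sub_Suc_root: "sub face (Suc k) c [0] = sub face k (face c 1) [0]"
  by (subst sub_Suc_omit[of 1]) auto

lemma sub_Suc_Suc_first_edge: "sub face (Suc (Suc k)) c [0, 1] = sub face (Suc k) (face c 2) [0, 1]"
  by (subst sub_Suc_omit[of 2]) (auto simp: less_2_cases_iff)

lemma sub_one_edge: "sub face 1 c [0, 1] = c"
  by (simp add: sub_Suc_all atLeast0_atMost_Suc insert_commute)

lemma sub_one_source: "sub face 1 e [0] = face e 1"
  using sub_Suc_root[of face 0 e] by simp

lemma sub_one_target: "sub face 1 e [1] = face e 0"
  by (subst One_nat_def, subst sub_Suc_omit[of 0]) auto

lemma sub_two_01: "sub face 2 c [0, 1] = face c 2"
  using sub_Suc_Suc_first_edge[of face 0 c] sub_one_edge[of face "face c 2"]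
  by (simp add: numeral_2_eq_2)

lemma sub_two_12: "sub face 2 c [1, 2] = face c 0"
  using sub_one_edge[of face "face c 0"]
  by (subst numeral_2_eq_2, subst sub_Suc_omit[of 0]) auto

lemma sub_two_02: "sub face 2 c [0, 2] = face c 1"
  using sub_one_edge[of face "face c 1"]
  by (subst numeral_2_eq_2, subst sub_Suc_omit[of 1]) auto

context
  fixes C :: "'c set" and dim :: "'c \<Rightarrow> nat" and face :: "'c \<Rightarrow> nat \<Rightarrow> 'c"
  assumes delta: "delta_complex C dim face"
begin

lemma face_mem:
  "c \<in> C \<Longrightarrow> 0 < dim c \<Longrightarrow> i \<le> dim c \<Longrightarrow> face c i \<in> C \<and> dim (face c i) = dim c - 1"
  using delta unfolding delta_complex_def by blast

lemma face_face:
  "c \<in> C \<Longrightarrow> 2 \<le> dim c \<Longrightarrow> i < j \<Longrightarrow> j \<le> dim c \<Longrightarrow>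
    face (face c j) i = face (face c i) (j - 1)"
  using delta unfolding delta_complex_def by blast

lemma root_mem: "c \<in> C \<Longrightarrow> dim c = k \<Longrightarrow> sub face k c [0] \<in> C \<and> dim (sub face k c [0]) = 0"
proof (induction k arbitrary: c)
  case (Suc k)
  then show ?case
    using face_mem[of c 1] by (simp add: sub_Suc_root)
qed simp

lemma root_face:
  "d \<in> C \<Longrightarrow> dim d = Suc m \<Longrightarrow> 1 \<le> j \<Longrightarrow> j \<le> Suc m \<Longrightarrow>
    sub face m (face d j) [0] = sub face (Suc m) d [0]"
proof (induction m arbitrary: d j)
  case (Suc m)
  show ?case
  proof (cases "j = 1")
    case False
    have d1: "face d 1 \<in> C" "dim (face d 1) = Suc m"
      using face_mem[of d 1] Suc.prems by auto
    have "sub face (Suc m) (face d j) [0] = sub face m (face (face d 1) (j - 1)) [0]"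
      using face_face[of d 1 j] Suc.prems False by (simp add: sub_Suc_root)
    also have "\<dots> = sub face (Suc m) (face d 1) [0]"
      using Suc.IH[OF d1, of "j - 1"] Suc.prems False by simp
    finally show ?thesis
      by (simp add: sub_Suc_root)
  qed (simp add: sub_Suc_root)
next
  case 0
  then show ?case
    using sub_one_source[of face d] by simp
qed

lemma first_edge:
  assumes "d \<in> C" "dim d = Suc m"
  shows "sub face (Suc m) d [0, 1] \<in> C \<and> dim (sub face (Suc m) d [0, 1]) = 1 \<and>
    face (sub face (Suc m) d [0, 1]) 1 = sub face (Suc m) d [0] \<and>
    face (sub face (Suc m) d [0, 1]) 0 = sub face m (face d 0) [0]"
  using assms
proof (induction m arbitrary: d)
  case 0
  then show ?case
    using sub_one_edge[of face d] sub_one_source[of face d] by simp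
next
  case (Suc m)
  have d2: "face d 2 \<in> C" "dim (face d 2) = Suc m"
    using face_mem[of d 2] Suc.prems by auto
  have "sub face (Suc m) (face d 2) [0] = sub face (Suc (Suc m)) d [0]"
    using root_face[of d "Suc m" 2] Suc.prems by simp
  moreover have "face (face d 2) 0 = face (face d 0) 1"
    using face_face[of d 0 2] Suc.prems by simp
  ultimately show ?case
    unfolding sub_Suc_Suc_first_edge sub_Suc_root[of face m "face d 0"]
    using Suc.IH[OF d2] by simp
qed

lemma label_sub:
  assumes label_face: "\<And>c i. c \<in> C \<Longrightarrow> 0 < dim c \<Longrightarrow> i \<le> dim c \<Longrightarrow> lab (face c i) = faceB (lab c) i"
  shows "c \<in> C \<Longrightarrow> dim c = k \<Longrightarrow> set vs \<subseteq> {0..k} \<Longrightarrow>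
    lab (sub face k c vs) = sub faceB k (lab c) vs"
proof (induction k arbitrary: c vs)
  case (Suc k)
  show ?case
  proof (cases "set vs = {0..Suc k}")
    case False
    define i where "i = Min ({0..Suc k} - set vs)"
    have "i \<in> {0..Suc k} - set vs"
      unfolding i_def using False Suc.prems(3) by (intro Min_in) auto
    then have i: "i \<le> Suc k" "i \<notin> set vs"
      by auto
    have "face c i \<in> C" "dim (face c i) = k"
      using face_mem[of c i] Suc.prems i by auto
    moreover have "set (map (\<lambda>s. if s < i then s else s - 1) vs) \<subseteq> {0..k}"
      using Suc.prems(3) i by (fastforce simp: subset_iff)
    ultimately show ?thesis
      using Suc.IH label_face[of c i] Suc.prems i False
      by (simp add: sub.simps(2) Let_def flip: i_def)
  qed (simp add: sub_Suc_all)
qed simp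

end

locale labeled_complex =
  fixes C :: "'c set" and dim :: "'c \<Rightarrow> nat" and face :: "'c \<Rightarrow> nat \<Rightarrow> 'c"
    and lab :: "'c \<Rightarrow> 'a option"
    and X :: "'a set" and P :: "nat \<Rightarrow> 'a set" and n :: nat
    and faceB :: "'a option \<Rightarrow> nat \<Rightarrow> 'a option"
  assumes B_structure: "B_structure X P n faceB"
    and labeled: "labeled_over C dim face lab X P n faceB"
begin

abbreviation "V \<equiv> vertices C dim"
abbreviation "G \<equiv> gen_rel C dim face lab X"

lemma delta: "delta_complex C dim face"
  using labeled by (simp add: labeled_over_def)

lemma label_cell: "c \<in> C \<Longrightarrow> lab c \<in> Bcells X P n \<and> Bdim X P (lab c) = dim c"
  using labeled by (simp add: labeled_over_def)

lemma label_face: "c \<in> C \<Longrightarrow> 0 < dim c \<Longrightarrow> i \<le> dim c \<Longrightarrow> lab (face c i) = faceB (lab c) i"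
  using labeled by (simp add: labeled_over_def)

lemma label_locally_injective:
  "c \<in> C \<Longrightarrow> c' \<in> C \<Longrightarrow> dim c = dim c' \<Longrightarrow> face_index (dim c) vs \<Longrightarrow>
    subcell dim face c vs = subcell dim face c' vs \<Longrightarrow> lab c = lab c' \<Longrightarrow> c = c'"
  using labeled unfolding labeled_over_def by blast

lemma X_disjoint_P: "X \<inter> P k = {}"
  using B_structure by (simp add: B_structure_def)

lemma P_disjoint: "j \<noteq> k \<Longrightarrow> P j \<inter> P k = {}"
  using B_structure by (simp add: B_structure_def)

lemma Bdim_P: "\<rho> \<in> P k \<Longrightarrow> Bdim X P (Some \<rho>) = k"
  using X_disjoint_P[of k] P_disjoint[of _ k]
  by (auto simp: Bdim_def intro!: the_equality)

lemma dim_labeled_P: "c \<in> C \<Longrightarrow> lab c = Some \<rho> \<Longrightarrow> \<rho> \<in> P k \<Longrightarrow> dim c = k"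
  using label_cell[of c] Bdim_P by auto

lemma label_edge: "e \<in> C \<Longrightarrow> dim e = 1 \<Longrightarrow> \<exists>a\<in>X. lab e = Some a"
  using label_cell[of e] Bdim_P by (fastforce simp: Bcells_def Bdim_def)

lemma label_higher_cell: "c \<in> C \<Longrightarrow> 2 \<le> dim c \<Longrightarrow> \<exists>\<rho>. \<rho> \<notin> X \<and> lab c = Some \<rho>"
  using label_cell[of c] by (auto simp: Bcells_def Bdim_def)

lemma subcell_edge:
  "dim e = 1 \<Longrightarrow> subcell dim face e [0] = face e 1 \<and> subcell dim face e [1] = face e 0"
  using sub_one_source[of face e] sub_one_target[of face e] by (simp add: subcell_def)

lemma root_mem_vertices: "c \<in> C \<Longrightarrow> subcell dim face c [0] \<in> V"
  using root_mem[OF delta, of c "dim c"] by (simp add: vertices_def subcell_def)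

lemma gen_rel_subset: "G a \<subseteq> V \<times> V"
proof (cases "a \<in> X")
  case True
  have "subcell dim face e [0] \<in> V \<and> subcell dim face e [1] \<in> V" if "e \<in> C" "dim e = 1" for e
    using face_mem[OF delta that(1), of 0] face_mem[OF delta that(1), of 1] that subcell_edge[of e]
    by (simp add: vertices_def)
  with True show ?thesis
    by (auto simp: gen_rel_def)
next
  case False
  then show ?thesis
    using root_mem_vertices by (auto simp: gen_rel_def)
qed

lemma gen_rel_partial_injection: "single_valued (G a) \<and> single_valued ((G a)\<inverse>)"
proof (cases "a \<in> X")
  case True
  have edges_eq: "e = e'"
    if "e \<in> C" "e' \<in> C" "dim e = 1" "dim e' = 1" "lab e = lab e'" "vs = [0] \<or> vs = [1]"
      "subcell dim face e vs = subcell dim face e' vs" for e e' vs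
    using label_locally_injective[OF that(1,2), of vs] that by (auto simp: face_index_def)
  show ?thesis
    using True by (auto simp: single_valued_def gen_rel_def dest: edges_eq)
next
  case False
  then show ?thesis
    by (auto simp: gen_rel_def single_valued_def)
qed

sublocale partial_injection_generators G V
  using gen_rel_subset gen_rel_partial_injection by unfold_locales auto

lemma edge_steps:
  assumes "e \<in> C" "dim e = 1"
  shows "(face e 1, face e 0) \<in> letter_rel G (the (lab e), False)"
    and "(face e 0, face e 1) \<in> letter_rel G (the (lab e), True)"
proof -
  obtain a where "a \<in> X" "lab e = Some a"
    using label_edge assms by blast
  then have "(face e 1, face e 0) \<in> G a"
    using assms subcell_edge[of e] by (force simp: gen_rel_def)
  with \<open>lab e = Some a\<close> show "(face e 1, face e 0) \<in> letter_rel G (the (lab e), False)"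
    and "(face e 0, face e 1) \<in> letter_rel G (the (lab e), True)"
    by (auto simp: letter_rel_def)
qed

lemma root_fixed:
  assumes "d \<in> C" "2 \<le> dim d"
  shows "(sub face (dim d) d [0], sub face (dim d) d [0]) \<in> letter_rel G (the (lab d), False)"
  using label_higher_cell[OF assms] assms by (auto simp: letter_rel_def gen_rel_def subcell_def)

lemma boundary_loop_triangle:
  assumes c: "c \<in> C" "dim c = 2" "lab c = Some \<rho>"
  shows "(sub face 2 c [0], sub face 2 c [0]) \<in> word_rel G V (bl_word faceB 2 \<rho>)"
proof -
  have faces: "face c i \<in> C" "dim (face c i) = 1" if "i \<le> 2" for i
    using face_mem[OF delta c(1), of i] c that by auto
  have "bl_word faceB 2 \<rho> = [(the (lab (face c 2)), False), (the (lab (face c 0)), False),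
      (the (lab (face c 1)), True)]"
    unfolding bl_word_def Let_def sub_two_01 sub_two_12 sub_two_02
    using label_face[OF c(1), of 2] label_face[OF c(1), of 0] label_face[OF c(1), of 1] c
    by simp
  moreover have "sub face 2 c [0] = face (face c 1) 1"
    using sub_Suc_root[of face 1 c] sub_one_source[of face "face c 1"] by (simp add: numeral_2_eq_2)
  moreover have "face (face c 2) 1 = face (face c 1) 1" "face (face c 2) 0 = face (face c 0) 1"
      "face (face c 1) 0 = face (face c 0) 0"
    using face_face[OF delta c(1)] c by auto
  ultimately show ?thesis
    using edge_steps(1)[OF faces[of 2]] edge_steps(1)[OF faces[of 0]] edge_steps(2)[OF faces[of 1]]
      root_mem_vertices[OF c(1)] c(2)
    by (auto simp: subcell_def)
qed

lemma boundary_loop_higher: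
  assumes c: "c \<in> C" "dim c = Suc m" "lab c = Some \<rho>" and m: "2 \<le> m"
  shows "(sub face (Suc m) c [0], sub face (Suc m) c [0]) \<in> word_rel G V (bl_word faceB (Suc m) \<rho>)"
proof -
  define r where "r = sub face (Suc m) c [0]"
  define e where "e = sub face (Suc m) c [0, 1]"
  have "sub faceB (Suc m) (Some \<rho>) [0, 1] = lab e"
    using label_sub[OF delta, where lab = lab and faceB = faceB, OF label_face, of c "Suc m" "[0, 1]"] c
    by (simp add: e_def)
  moreover have "map (\<lambda>i. (the (faceB (Some \<rho>) i), False)) (rev [1..<Suc m + 1])
      = map (\<lambda>i. (the (lab (face c i)), False)) (rev [1..<Suc m + 1])"
    using label_face[OF c(1)] c by (intro map_cong) auto
  moreover have "faceB (Some \<rho>) 0 = lab (face c 0)"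
    using label_face[OF c(1), of 0] c by simp
  ultimately have bl: "bl_word faceB (Suc m) \<rho> = map (\<lambda>i. (the (lab (face c i)), False)) (rev [1..<Suc m + 1])
      @ [(the (lab e), False), (the (lab (face c 0)), False), (the (lab e), True)]"
    using m unfolding bl_word_def Let_def by simp
  have face0: "face c 0 \<in> C" "dim (face c 0) = m"
    using face_mem[OF delta c(1), of 0] c by auto
  have "e \<in> C" "dim e = 1" "face e 1 = r" "face e 0 = sub face m (face c 0) [0]"
    using first_edge[OF delta c(1,2)] by (simp_all add: e_def r_def)
  then have "(r, r) \<in> word_rel G V
      [(the (lab e), False), (the (lab (face c 0)), False), (the (lab e), True)]"
    using edge_steps[of e] root_fixed[OF face0(1)] face0(2) m root_mem_vertices[OF c(1)] c(2)
    by (force simp: r_def subcell_def)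
  moreover have "(r, r) \<in> letter_rel G (the (lab (face c i)), False)" if "1 \<le> i" "i \<le> Suc m" for i
  proof -
    have "face c i \<in> C" "dim (face c i) = m"
      using face_mem[OF delta c(1), of i] c that by auto
    then show ?thesis
      using root_fixed[of "face c i"] root_face[OF delta c(1,2) that] m by (simp add: r_def)
  qed
  ultimately show ?thesis
    unfolding bl r_def[symmetric] by (intro word_rel_append_loops) auto
qed

lemma boundary_loop:
  assumes "c \<in> C" "lab c = Some \<rho>" "2 \<le> dim c"
  shows "(subcell dim face c [0], subcell dim face c [0]) \<in> word_rel G V (bl_word faceB (dim c) \<rho>)"
proof (cases "dim c = 2")
  case True
  then show ?thesis
    using boundary_loop_triangle[of c \<rho>] assms by (simp add: subcell_def)
next
  case False
  then obtain m where "dim c = Suc m" "2 \<le> m"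
    using assms(3) by (cases "dim c") auto
  then show ?thesis
    using boundary_loop_higher[of c m \<rho>] assms by (simp add: subcell_def)
qed

lemma M_relations_respected:
  assumes "(u, v) \<in> M_relations P n faceB"
  shows "word_rel G V u = word_rel G V v"
proof -
  obtain \<rho> k where \<rho>: "k \<in> {2..n}" "\<rho> \<in> P k" and
    uv: "(u = [(\<rho>, False), (\<rho>, False)] \<and> v = [(\<rho>, False)]) \<or>
         (u = [(\<rho>, False)] \<and> v = (\<rho>, False) # bl_word faceB k \<rho>)"
    using assms unfolding M_relations_def by blast
  have G\<rho>: "G \<rho> = {(subcell dim face c [0], subcell dim face c [0]) | c. c \<in> C \<and> lab c = Some \<rho>}"
    using X_disjoint_P[of k] \<rho> by (auto simp: gen_rel_def)
  have "G \<rho> O word_rel G V (bl_word faceB k \<rho>) = G \<rho>"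
  proof (rule relcomp_partial_identity_eq)
    show "single_valued (word_rel G V (bl_word faceB k \<rho>))"
      using word_rel_partial_injection by (simp add: partial_injection_on_def)
    show "(x, x) \<in> word_rel G V (bl_word faceB k \<rho>)" if "(x, x) \<in> G \<rho>" for x
      using that boundary_loop dim_labeled_P[OF _ _ \<rho>(2)] \<rho>(1) unfolding G\<rho> by fastforce
  qed (auto simp: G\<rho>)
  moreover have "G \<rho> O G \<rho> = G \<rho>"
    unfolding G\<rho> by blast
  moreover have "word_rel G V [(\<rho>, False)] = G \<rho>"
    by (simp only: word_rel_single) (simp add: letter_rel_def)
  ultimately show ?thesis
    using uv word_rel_append[of "[(\<rho>, False)]"] by (auto simp del: word_rel_Cons)
qed

end

theorem mainTheorem9:
  fixes C :: "'c set" and dim :: "'c \<Rightarrow> nat" and face :: "'c \<Rightarrow> nat \<Rightarrow> 'c"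
    and lab :: "'c \<Rightarrow> 'a option"
    and X :: "'a set" and P :: "nat \<Rightarrow> 'a set" and n :: nat
    and faceB :: "'a option \<Rightarrow> nat \<Rightarrow> 'a option"
  assumes "B_structure X P n faceB"
    and "labeled_over C dim face lab X P n faceB"
  shows "(\<forall>a \<in> M_alphabet X P n.
            partial_injection_on (vertices C dim) (gen_rel C dim face lab X a))
       \<and> (\<forall>w \<in> lists (M_alphabet X P n \<times> UNIV).
            partial_injection_on (vertices C dim) (word_rel (gen_rel C dim face lab X) (vertices C dim) w))
       \<and> (\<forall>u v. (u, v) \<in> M_equiv X P n faceB \<longrightarrow>
            word_rel (gen_rel C dim face lab X) (vertices C dim) u
          = word_rel (gen_rel C dim face lab X) (vertices C dim) v)"
proof -
  interpret labeled_complex C dim face lab X P n faceB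
    using assms by unfold_locales
  have "(u, v) \<in> M_equiv X P n faceB \<Longrightarrow> word_rel G V u = word_rel G V v" for u v
    unfolding M_equiv_def by (rule word_rel_inv_cong[OF M_relations_respected])
  then show ?thesis
    using gen_rel_subset gen_rel_partial_injection word_rel_partial_injection
    by (auto simp: partial_injection_on_def)
qed

end
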